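(* Let $F_1(x_0,x_1,x_2)$, $F_2(y_0,y_1,y_2)$ be homogeneous of degree $d$ such that $X: F_1(x)=F_2(y)$ in $\mathbb{P}^5(\mathbb{C})$ is smooth. If $F_1\sim F_2$, then $X$ contains exactly $|\mathrm{Aut}(F_1)|$ planes of rank $3$.
   Context: Coordinates on $\mathbb{P}^5$ are $[x_0:x_1:x_2:y_0:y_1:y_2]$. Every plane in $\mathbb{P}^5$ is given by a rank-3 system $Ax=By$ with $A,B$ complex $3\times3$ matrices; the plane is of rank $k$ if $\mathrm{rank}\,A=k$ (this does not depend on the chosen system). $F\sim G$ means there exists $g\in\mathrm{GL}_3(\mathbb{C})$ with $F(gx)=G(x)$; $\mathrm{Aut}(F)=\{g\in\mathrm{GL}_3(\mathbb{C}) : F(gx)=F(x)\}$. *)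

theory Defs
  imports "HOL-Analysis.Analysis" "HOL-Library.Equipollence"
begin

text \<open>Points of C^3; a point of P^5 is represented by its (nonzero) affine
  coordinates (x,y) in C^3 x C^3.\<close>

definition hom_poly :: "nat \<Rightarrow> (complex^3 \<Rightarrow> complex) \<Rightarrow> bool" where
  "hom_poly d F \<longleftrightarrow> (\<exists>c :: nat \<Rightarrow> nat \<Rightarrow> nat \<Rightarrow> complex. \<forall>x.
     F x = (\<Sum>i\<le>d. \<Sum>j\<le>d - i. c i j (d - i - j) * (x$1)^i * (x$2)^j * (x$3)^(d - i - j)))"

definition pdiff :: "(complex^3 \<Rightarrow> complex) \<Rightarrow> complex^3 \<Rightarrow> 3 \<Rightarrow> complex" where
  "pdiff F x i = deriv (\<lambda>t. F (x + t *s axis i 1)) 0"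

definition hyp_X :: "(complex^3 \<Rightarrow> complex) \<Rightarrow> (complex^3 \<Rightarrow> complex) \<Rightarrow> ((complex^3) \<times> (complex^3)) set" where
  "hyp_X F1 F2 = {(x, y). F1 x = F2 y}"

text \<open>X is smooth: no point of P^5 on X where all partial derivatives of
  F1(x) - F2(y) vanish (Jacobian criterion).\<close>
definition smooth_X :: "(complex^3 \<Rightarrow> complex) \<Rightarrow> (complex^3 \<Rightarrow> complex) \<Rightarrow> bool" where
  "smooth_X F1 F2 \<longleftrightarrow> \<not> (\<exists>x y. (x, y) \<noteq> (0, 0) \<and> (x, y) \<in> hyp_X F1 F2 \<and>
      (\<forall>i. pdiff F1 x i = 0) \<and> (\<forall>i. pdiff F2 y i = 0))"

text \<open>The 3 x 6 coefficient matrix [A | -B] of the system A x = B y.\<close>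
definition sys_mat :: "complex^3^3 \<Rightarrow> complex^3^3 \<Rightarrow> complex^(3 + 3)^3" where
  "sys_mat A B = (\<chi> i. \<chi> j. case j of Inl k \<Rightarrow> A$i$k | Inr k \<Rightarrow> - (B$i$k))"

definition sys_sol :: "complex^3^3 \<Rightarrow> complex^3^3 \<Rightarrow> ((complex^3) \<times> (complex^3)) set" where
  "sys_sol A B = {(x, y). A *v x = B *v y}"

text \<open>A plane of P^5 (as its affine cone): solution set of a rank-3 system A x = B y.\<close>
definition is_plane :: "((complex^3) \<times> (complex^3)) set \<Rightarrow> bool" where
  "is_plane P \<longleftrightarrow> (\<exists>A B. rank (sys_mat A B) = 3 \<and> P = sys_sol A B)"

definition plane_of_rank :: "nat \<Rightarrow> ((complex^3) \<times> (complex^3)) set \<Rightarrow> bool" where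
  "plane_of_rank k P \<longleftrightarrow> (\<exists>A B. rank (sys_mat A B) = 3 \<and> P = sys_sol A B \<and> rank A = k)"

definition equiv_form :: "(complex^3 \<Rightarrow> complex) \<Rightarrow> (complex^3 \<Rightarrow> complex) \<Rightarrow> bool" where
  "equiv_form F G \<longleftrightarrow> (\<exists>g :: complex^3^3. invertible g \<and> (\<forall>x. F (g *v x) = G x))"

definition Aut :: "(complex^3 \<Rightarrow> complex) \<Rightarrow> (complex^3^3) set" where
  "Aut F = {g. invertible g \<and> (\<forall>x. F (g *v x) = F x)}"

end

theory Submission
  imports Defs
begin

text \<open>A rank-3 plane is the graph \<open>x = C y\<close> of a linear map, and it lies on \<open>X\<close> exactly
  when \<open>F\<^sub>1 (C y) = F\<^sub>2 y\<close>; so the planes correspond to the substitutions \<open>C\<close> turning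
  \<open>F\<^sub>1\<close> into \<open>F\<^sub>2\<close>. Fix one invertible such \<open>g\<close>. For \<open>d \<noteq> 1\<close> every substitution \<open>C\<close> is
  invertible: for a kernel vector \<open>y\<close> of \<open>C\<close>, the point \<open>(0, y)\<close> lies on \<open>X\<close> and is singular,
  because \<open>F\<^sub>1 (t e) = t\<^sup>d F\<^sub>1 e\<close> and \<open>F\<^sub>2 (y + t e) = F\<^sub>1 (t C e) = t\<^sup>d F\<^sub>1 (C e)\<close> have zero
  derivative at \<open>t = 0\<close>. Hence \<open>C \<mapsto> C g\<^sup>-\<^sup>1\<close> is a bijection onto \<open>Aut F\<^sub>1\<close>.
  For \<open>d = 1\<close> both sets have the cardinality of \<open>\<complex>\<close>: the substitutions are among the
  \<open>3 \<times> 3\<close> matrices, and \<open>Aut F\<^sub>1\<close> contains a one-parameter group of transvections.\<close>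

definition substitutions :: "('a::semiring_1^'n \<Rightarrow> 'b) \<Rightarrow> ('a^'m \<Rightarrow> 'b) \<Rightarrow> ('a^'m^'n) set" where
  "substitutions F G = {C. \<forall>y. F (C *v y) = G y}"

definition graph_plane :: "complex^3^3 \<Rightarrow> ((complex^3) \<times> (complex^3)) set" where
  "graph_plane C = {(C *v y, y) | y. True}"

definition transvection :: "'a::semiring_1^'n \<Rightarrow> 'a^'n \<Rightarrow> 'a \<Rightarrow> 'a^'n^'n" where
  "transvection u w t = mat 1 + (\<chi> i j. t * u$i * w$j)"

lemma Aut_eqpoll_invertible_substitutions:
  assumes "equiv_form F G"
  shows "Aut F \<approx> {C \<in> substitutions F G. invertible C}"
proof -
  obtain g where "invertible g" and Fg: "\<And>x. F (g *v x) = G x"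
    using assms unfolding equiv_form_def by blast
  then obtain g' where gg': "g ** g' = mat 1" and g'g: "g' ** g = mat 1"
    unfolding invertible_def by blast
  have "bij_betw (\<lambda>h. h ** g) (Aut F) {C \<in> substitutions F G. invertible C}"
  proof (rule bij_betw_byWitness[where f' = "\<lambda>C. C ** g'"])
    show "\<forall>h\<in>Aut F. h ** g ** g' = h"
      and "\<forall>C\<in>{C \<in> substitutions F G. invertible C}. C ** g' ** g = C"
      by (simp_all add: gg' g'g flip: matrix_mul_assoc)
    show "(\<lambda>h. h ** g) ` Aut F \<subseteq> {C \<in> substitutions F G. invertible C}"
      using \<open>invertible g\<close>
      by (auto simp: Aut_def substitutions_def invertible_mult Fg simp flip: matrix_vector_mul_assoc)
    have "F ((C ** g') *v x) = F x" if "C \<in> substitutions F G" for C x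
    proof -
      have "F ((C ** g') *v x) = G (g' *v x)"
        using that by (simp add: substitutions_def flip: matrix_vector_mul_assoc)
      also have "\<dots> = F x"
        by (simp flip: Fg add: matrix_vector_mul_assoc gg')
      finally show ?thesis .
    qed
    moreover have "invertible g'"
      using gg' g'g unfolding invertible_def by blast
    ultimately show "(\<lambda>C. C ** g') ` {C \<in> substitutions F G. invertible C} \<subseteq> Aut F"
      by (auto simp: Aut_def invertible_mult)
  qed
  then show ?thesis
    unfolding eqpoll_def by blast
qed

lemma rank_eq_card_rows_if_right_invertible:
  fixes M :: "'a::field^'n^'m"
  assumes "M ** N = mat 1"
  shows "rank M = CARD('m)"
proof -
  have indep: "(\<Sum>i\<in>UNIV. c i *s row i M) = 0 \<Longrightarrow> c i = 0" for c i
    using assms matrix_right_invertible_independent_rows by blast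
  have inj: "inj (\<lambda>i. row i M)"
  proof (rule injI)
    fix i j assume "row i M = row j M"
    then have "(M ** N) $ i = (M ** N) $ j"
      by (simp add: matrix_matrix_mult_def row_def vec_eq_iff)
    then show "i = j"
      using assms by (auto simp: mat_def vec_eq_iff split: if_splits)
  qed
  have rows: "rows M = range (\<lambda>i. row i M)"
    unfolding rows_def by auto
  have "vec.independent (rows M)"
  proof (rule vec.independent_if_scalars_zero)
    show "finite (rows M)"
      unfolding rows by simp
    fix f v assume sum: "(\<Sum>v\<in>rows M. f v *s v) = 0" and "v \<in> rows M"
    then obtain i where "v = row i M"
      unfolding rows by blast
    moreover have "(\<Sum>i\<in>UNIV. f (row i M) *s row i M) = 0"
      using sum unfolding rows by (simp add: sum.reindex[OF inj])
    ultimately show "f v = 0"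
      using indep[of "\<lambda>i. f (row i M)"] by blast
  qed
  then have "rank M = card (rows M)"
    unfolding row_rank_def_gen by (rule vec.dim_eq_card_independent)
  also have "\<dots> = CARD('m)"
    unfolding rows using inj by (simp add: card_image)
  finally show ?thesis .
qed

lemma invertible_if_full_rank:
  fixes A :: "'a::field^'n^'n"
  assumes "rank A = CARD('n)"
  shows "invertible A"
proof -
  have "vec.dim (rows A) = vec.dim (UNIV :: ('a^'n) set)"
    using assms by (simp add: row_rank_def_gen vec_dim_card card_cart_basis)
  then have "vec.span (rows A) = UNIV"
    using vec.dim_eq_full vec.dim_UNIV vec.dimension_def by metis
  then show ?thesis
    using matrix_left_invertible_span_rows_gen invertible_left_inverse by blast
qed

lemma plane_of_rank_3_is_graph_plane:
  assumes "plane_of_rank 3 P"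
  obtains C where "P = graph_plane C"
proof -
  obtain A B where P: "P = sys_sol A B" and "rank A = 3"
    using assms unfolding plane_of_rank_def by blast
  then have "invertible A"
    by (intro invertible_if_full_rank) simp
  then obtain A' where A'A: "A' ** A = mat 1" and AA': "A ** A' = mat 1"
    unfolding invertible_def by blast
  have "A *v x = B *v y \<longleftrightarrow> x = (A' ** B) *v y" for x y
    by (metis A'A AA' matrix_vector_mul_assoc matrix_vector_mul_lid)
  then have "P = graph_plane (A' ** B)"
    unfolding P sys_sol_def graph_plane_def by auto
  then show thesis ..
qed

lemma sum_UNIV_Plus:
  "(\<Sum>j\<in>(UNIV :: ('a::finite + 'b::finite) set). f j) = (\<Sum>k\<in>UNIV. f (Inl k)) + (\<Sum>k\<in>UNIV. f (Inr k))"
  unfolding UNIV_Plus_UNIV[symmetric] by (subst sum.Plus) (auto simp: comp_def)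

lemma graph_plane_of_rank_3: "is_plane (graph_plane C) \<and> plane_of_rank 3 (graph_plane C)"
proof -
  define N :: "complex^3^(3+3)" where
    "N = (\<chi> j i. case j of Inl k \<Rightarrow> if k = i then 1 else 0 | Inr _ \<Rightarrow> 0)"
  have "(sys_mat (mat 1) C ** N) $ i $ j = (\<Sum>k\<in>UNIV. mat 1 $ i $ k * (if k = j then 1 else 0))" for i j
    by (simp add: matrix_matrix_mult_def sum_UNIV_Plus sys_mat_def N_def)
  then have "sys_mat (mat 1) C ** N = mat 1"
    by (simp add: vec_eq_iff if_distrib cong: if_cong)
  then have "rank (sys_mat (mat 1) C) = 3"
    by (simp add: rank_eq_card_rows_if_right_invertible)
  moreover have "rank (mat 1 :: complex^3^3) = 3"
    using rank_eq_card_rows_if_right_invertible[of "mat 1 :: complex^3^3" "mat 1"] by simp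
  moreover have "graph_plane C = sys_sol (mat 1) C"
    unfolding graph_plane_def sys_sol_def by auto
  ultimately show ?thesis
    unfolding is_plane_def plane_of_rank_def by blast
qed

lemma inj_graph_plane: "inj graph_plane"
proof (rule injI)
  fix C D assume "graph_plane C = graph_plane D"
  then have "C *v y = D *v y" for y
    unfolding graph_plane_def by (auto simp: set_eq_iff)
  then show "C = D"
    by (simp add: matrix_eq)
qed

lemma rank_3_planes_in_hyp_X_eqpoll:
  "{P. is_plane P \<and> plane_of_rank 3 P \<and> P \<subseteq> hyp_X F1 F2} \<approx> substitutions F1 F2"
proof -
  have graph_in_X: "graph_plane C \<subseteq> hyp_X F1 F2 \<longleftrightarrow> C \<in> substitutions F1 F2" for C
    unfolding graph_plane_def hyp_X_def substitutions_def by auto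
  have "{P. is_plane P \<and> plane_of_rank 3 P \<and> P \<subseteq> hyp_X F1 F2} = graph_plane ` substitutions F1 F2"
  proof (intro set_eqI iffI)
    fix P assume "P \<in> {P. is_plane P \<and> plane_of_rank 3 P \<and> P \<subseteq> hyp_X F1 F2}"
    then show "P \<in> graph_plane ` substitutions F1 F2"
      by (metis (mono_tags) graph_in_X image_eqI mem_Collect_eq plane_of_rank_3_is_graph_plane)
  qed (use graph_plane_of_rank_3 graph_in_X in blast)
  also have "\<dots> \<approx> substitutions F1 F2"
    by (rule inj_on_image_eqpoll_self) (rule inj_on_subset[OF inj_graph_plane subset_UNIV])
  finally show ?thesis .
qed

lemma hom_poly_scale:
  assumes "hom_poly d F"
  shows "F (c *s x) = c^d * F x"
proof -
  obtain a where a: "\<And>x. F x = (\<Sum>i\<le>d. \<Sum>j\<le>d - i.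
      a i j (d - i - j) * (x$1)^i * (x$2)^j * (x$3)^(d - i - j))"
    using assms unfolding hom_poly_def by blast
  have "F (c *s x) = (\<Sum>i\<le>d. \<Sum>j\<le>d - i.
      c^d * (a i j (d - i - j) * (x$1)^i * (x$2)^j * (x$3)^(d - i - j)))"
    unfolding a
  proof (intro sum.cong refl)
    fix i j assume "i \<in> {..d}" "j \<in> {..d - i}"
    then have "c^d = c^i * c^j * c^(d - i - j)"
      by (simp flip: power_add)
    then show "a i j (d - i - j) * ((c *s x)$1)^i * ((c *s x)$2)^j * ((c *s x)$3)^(d - i - j)
        = c^d * (a i j (d - i - j) * (x$1)^i * (x$2)^j * (x$3)^(d - i - j))"
      by (simp add: power_mult_distrib)
  qed
  then show ?thesis
    unfolding a by (simp add: sum_distrib_left)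
qed

lemma pdiff_eq_0_if_power_on_line:
  assumes "\<And>t. F (x + t *s axis i 1) = t^d * k" and "d \<noteq> 1"
  shows "pdiff F x i = 0"
proof -
  have "((\<lambda>t. t^d * k) has_field_derivative (of_nat d * 0^(d - 1) * k)) (at 0)"
    by (auto intro!: derivative_eq_intros)
  moreover have "of_nat d * (0::complex)^(d - 1) * k = 0"
    using assms(2) by (cases d) auto
  ultimately show ?thesis
    unfolding pdiff_def assms(1) using DERIV_imp_deriv by fastforce
qed

lemma substitution_invertible:
  assumes "hom_poly d F1" "d \<noteq> 1" "smooth_X F1 F2" "C \<in> substitutions F1 F2"
  shows "invertible C"
proof (rule ccontr)
  assume "\<not> invertible C"
  then obtain y where "y \<noteq> 0" and Cy: "C *v y = 0"
    unfolding invertible_left_inverse matrix_left_invertible_ker by blast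
  have F2: "F2 z = F1 (C *v z)" for z
    using assms(4) unfolding substitutions_def by simp
  have "(0, y) \<in> hyp_X F1 F2"
    unfolding hyp_X_def by (simp add: F2 Cy)
  moreover have "pdiff F1 0 i = 0" for i
    using assms(2) by (intro pdiff_eq_0_if_power_on_line) (simp add: hom_poly_scale[OF assms(1)])
  moreover have "pdiff F2 y i = 0" for i
  proof (rule pdiff_eq_0_if_power_on_line[OF _ assms(2)])
    fix t
    have "C *v (y + t *s axis i 1) = t *s (C *v axis i 1)"
      by (simp add: Cy matrix_vector_right_distrib vector_scalar_commute)
    then show "F2 (y + t *s axis i 1) = t^d * F1 (C *v axis i 1)"
      by (simp add: F2 hom_poly_scale[OF assms(1)])
  qed
  ultimately show False
    using assms(3) \<open>y \<noteq> 0\<close> unfolding smooth_X_def by blast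
qed

lemma hom_poly_1_scalar_product:
  assumes "hom_poly 1 F"
  obtains a where "F = scalar_product a"
proof -
  obtain c where c: "\<And>x. F x = (\<Sum>i\<le>1. \<Sum>j\<le>1 - i.
      c i j (1 - i - j) * (x$1)^i * (x$2)^j * (x$3)^(1 - i - j))"
    using assms unfolding hom_poly_def by blast
  show thesis
    by (rule that[of "vector [c 1 0 0, c 0 1 0, c 0 0 1]"])
      (simp add: fun_eq_iff c scalar_product_def sum_3 atMost_Suc algebra_simps)
qed

lemma scalar_product_orthogonal_nonzero:
  fixes v :: "'a::comm_ring_1^3"
  obtains u where "u \<noteq> 0" "scalar_product v u = 0"
proof (cases "v$1 = 0")
  case True
  show thesis
    by (rule that[of "axis 1 1"]) (simp_all add: True scalar_product_def sum_3 axis_def vec_eq_iff)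
next
  case False
  show thesis
    by (rule that[of "vector [v$2, - v$1, 0]"])
      (simp_all add: False scalar_product_def sum_3 vec_eq_iff exI[of _ 2] algebra_simps)
qed

lemma scalar_product_add_right: "scalar_product w (x + y) = scalar_product w x + scalar_product w y"
  by (simp add: scalar_product_def sum.distrib algebra_simps)

lemma scalar_product_scale_right: "scalar_product w (c *s x) = c * scalar_product w x"
  for w :: "'a::comm_semiring_1^'n"
  by (simp add: scalar_product_def sum_distrib_left algebra_simps)

lemma transvection_mult_vec:
  "transvection u w t *v x = x + (t * scalar_product w x) *s u"
  for u :: "'a::comm_semiring_1^'n"
proof -
  have "(\<chi> i j. t * u$i * w$j) *v x = (t * scalar_product w x) *s u"
    by (simp add: vec_eq_iff matrix_vector_mult_def scalar_product_def sum_distrib_left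
        algebra_simps)
  then show ?thesis
    by (simp add: transvection_def matrix_vector_mult_add_rdistrib)
qed

lemma transvection_mult:
  fixes u w :: "'a::comm_ring_1^'n"
  assumes "scalar_product w u = 0"
  shows "transvection u w s ** transvection u w t = transvection u w (s + t)"
  by (simp add: matrix_eq transvection_mult_vec scalar_product_add_right
      scalar_product_scale_right assms algebra_simps flip: matrix_vector_mul_assoc)

lemma transvection_0: "transvection u w 0 = mat 1"
  by (simp add: transvection_def vec_eq_iff)

lemma invertible_transvection:
  fixes u w :: "'a::comm_ring_1^'n"
  assumes "scalar_product w u = 0"
  shows "invertible (transvection u w t)"
  unfolding invertible_def
  using transvection_mult[OF assms, of t "-t"] transvection_mult[OF assms, of "-t" t]
  by (auto simp: transvection_0)

lemma inj_transvection:
  fixes u w :: "'a::idom^'n"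
  assumes "u \<noteq> 0" "w \<noteq> 0"
  shows "inj (transvection u w)"
proof (rule injI)
  obtain i j where "u$i \<noteq> 0" "w$j \<noteq> 0"
    using assms by (metis vec_eq_iff zero_index)
  moreover fix s t assume "transvection u w s = transvection u w t"
  then have "s * (u$i * w$j) = t * (u$i * w$j)"
    by (auto simp: transvection_def vec_eq_iff mat_def mult.assoc dest: spec[of _ i] spec[of _ j])
  ultimately show "s = t"
    by simp
qed

lemma UNIV_lepoll_Aut_scalar_product: "(UNIV :: complex set) \<lesssim> Aut (scalar_product a)"
proof -
  obtain u :: "complex^3" where "u \<noteq> 0" "scalar_product a u = 0"
    using scalar_product_orthogonal_nonzero by blast
  moreover obtain w :: "complex^3" where "w \<noteq> 0" "scalar_product u w = 0"
    using scalar_product_orthogonal_nonzero by blast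
  moreover have wu: "scalar_product w u = 0"
    using calculation by (simp add: scalar_product_def mult.commute)
  ultimately have "inj (transvection u w)"
    by (simp add: inj_transvection)
  moreover have "transvection u w t \<in> Aut (scalar_product a)" for t
    using \<open>scalar_product a u = 0\<close>
    by (simp add: Aut_def invertible_transvection[OF wu] transvection_mult_vec
        scalar_product_add_right scalar_product_scale_right)
  ultimately show ?thesis
    unfolding lepoll_def by blast
qed

lemma vec3_lepoll_infinite:
  assumes "infinite (UNIV :: 'a set)"
  shows "(UNIV :: ('a^3) set) \<lesssim> (UNIV :: 'a set)"
proof -
  have sq: "A \<times> A \<lesssim> A" if "infinite A" for A :: "'a set"
    using card_of_Times_same_infinite[OF that] eqpoll_iff_card_of_ordIso eqpoll_imp_lepoll by blast
  have "inj (\<lambda>v :: 'a^3. (v$1, v$2, v$3))"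
    by (auto simp: inj_on_def vec_eq_iff forall_3)
  then have "(UNIV :: ('a^3) set) \<lesssim> (UNIV :: 'a set) \<times> ((UNIV :: 'a set) \<times> (UNIV :: 'a set))"
    unfolding lepoll_def by blast
  also have "\<dots> \<lesssim> (UNIV :: 'a set) \<times> (UNIV :: 'a set)"
    by (rule times_lepoll_mono[OF lepoll_refl sq[OF assms]])
  also have "\<dots> \<lesssim> (UNIV :: 'a set)"
    by (rule sq[OF assms])
  finally show ?thesis .
qed

lemma matrices_lepoll_complex: "(UNIV :: (complex^3^3) set) \<lesssim> (UNIV :: complex set)"
proof -
  have infinite: "infinite (UNIV :: complex set)"
    by (rule infinite_UNIV_char_0)
  have "UNIV = range (\<lambda>v::complex^3. v$1)"
    by (auto intro: range_eqI[where x = "\<chi> i. _"])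
  then have "infinite (range (\<lambda>v::complex^3. v$1))"
    using infinite by simp
  then have "infinite (UNIV :: (complex^3) set)"
    using finite_imageI by blast
  then have "(UNIV :: (complex^3^3) set) \<lesssim> (UNIV :: (complex^3) set)"
    by (rule vec3_lepoll_infinite)
  also have "\<dots> \<lesssim> (UNIV :: complex set)"
    using infinite by (rule vec3_lepoll_infinite)
  finally show ?thesis .
qed

theorem lemma2p2:
  fixes F1 F2 :: "complex^3 \<Rightarrow> complex" and d :: nat
  assumes "hom_poly d F1" and "hom_poly d F2"
    and "smooth_X F1 F2"
    and "equiv_form F1 F2"
  shows "{P. is_plane P \<and> plane_of_rank 3 P \<and> P \<subseteq> hyp_X F1 F2} \<approx> Aut F1"
proof -
  let ?S = "substitutions F1 F2"
  have Aut: "Aut F1 \<approx> {C \<in> ?S. invertible C}"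
    using assms(4) by (rule Aut_eqpoll_invertible_substitutions)
  have "?S \<approx> Aut F1"
  proof (cases "d = 1")
    case True
    then obtain a where "F1 = scalar_product a"
      using assms(1) hom_poly_1_scalar_product by blast
    have "?S \<lesssim> (UNIV :: (complex^3^3) set)"
      by (simp add: subset_imp_lepoll)
    also have "\<dots> \<lesssim> (UNIV :: complex set)"
      by (rule matrices_lepoll_complex)
    also have "\<dots> \<lesssim> Aut F1"
      unfolding \<open>F1 = scalar_product a\<close> by (rule UNIV_lepoll_Aut_scalar_product)
    finally have "?S \<lesssim> Aut F1" .
    moreover have "Aut F1 \<lesssim> ?S"
      using eqpoll_imp_lepoll[OF Aut] subset_imp_lepoll[of "{C \<in> ?S. invertible C}" ?S]
      by (blast intro: lepoll_trans)
    ultimately show ?thesis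
      by (rule lepoll_antisym)
  next
    case False
    then have "{C \<in> ?S. invertible C} = ?S"
      using substitution_invertible[OF assms(1) _ assms(3)] by blast
    then show ?thesis
      using eqpoll_sym[OF Aut] by simp
  qed
  then show ?thesis
    using rank_3_planes_in_hyp_X_eqpoll eqpoll_trans by blast
qed

end
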